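(* Let $P$ be an integer such that $P^2+4$ is square-free, and let $m\ge 0$ be an integer. Consider the equation $$\sigma_2(n)-n^2=V_{2m}(P,-1)\,n-V_{2m}(P,-1)^2+5$$ in positive integers $n$. Then every solution $n$ with $n>\big(|V_{2m}(P,-1)|+V_{2m}(P,-1)^2-5\big)^3$ is of one of the following forms (so all solutions not of these forms lie in the finite, computable range $n\le(|V_{2m}(P,-1)|+V_{2m}(P,-1)^2-5)^3$): (1) $n=V_{2k}(P,-1)\,V_{2k+2m}(P,-1)$ for some integer $k\ge 0$, with $V_{2k}(P,-1)$ and $V_{2k+2m}(P,-1)$ both prime; (2) $n=V_{2k}(P,-1)\,V_{2m-2k}(P,-1)$ for some integer $k$ with $0\le k\le m$ and $m\ne 2k$, with $V_{2k}(P,-1)$ and $V_{2m-2k}(P,-1)$ both prime.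
   Context: For a positive integer $n$ and $k\ge 0$, $\sigma_k(n)=\sum_{d\mid n,\ d>0} d^k$. For integers $P,Q$, the Lucas sequences are defined for $j\ge 0$ by $U_0(P,Q)=0$, $U_1(P,Q)=1$, $U_j(P,Q)=P\,U_{j-1}(P,Q)-Q\,U_{j-2}(P,Q)$ for $j>1$, and $V_0(P,Q)=2$, $V_1(P,Q)=P$, $V_j(P,Q)=P\,V_{j-1}(P,Q)-Q\,V_{j-2}(P,Q)$ for $j>1$. An integer is square-free if it is not divisible by the square of any prime. *)

theory Defs
  imports Main "HOL-Computational_Algebra.Squarefree" "HOL-Computational_Algebra.Primes"
begin

definition sigma :: "nat \<Rightarrow> nat \<Rightarrow> nat" where
  "sigma k n = (\<Sum>d\<in>{d. d dvd n \<and> d > 0}. d ^ k)"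

fun lucasV :: "int \<Rightarrow> int \<Rightarrow> nat \<Rightarrow> int" where
  "lucasV P Q 0 = 2"
| "lucasV P Q (Suc 0) = P"
| "lucasV P Q (Suc (Suc j)) = P * lucasV P Q (Suc j) - Q * lucasV P Q j"

end

theory Submission
  imports Defs
begin

(* Let c = |P| and V = V_{2m}(P,-1). The even-index Lucas numbers W_k = V_{2k}(P,-1) and
   U_k = U_{2k}(P,-1) satisfy W_k^2 - (c^2+4) U_k^2 = 4, and by descent every positive solution of
   x^2 - (c^2+4) z^2 = 4 is such a pair. Comparing sigma_2(n) with the squares of the smallest
   divisors of n shows that a solution above the bound is a product pq of two distinct primes.
   Then q^2 - V p q + p^2 + V^2 - 4 = 0, whose discriminant (V^2-4)(p^2-4) = (c^2+4) U_m^2 (p^2-4)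
   must be a square; as c^2+4 is squarefree, p^2 - 4 = (c^2+4) y^2, so p = W_k, and the two roots
   of the quadratic in q are W_{k+m} and W_{|k-m|}. *)

(* lucasV_even c k = V_{2k}(c,-1) and lucasU_even c k = U_{2k}(c,-1); both obey the step-two
   recurrence with multiplier V_2(c,-1) = c^2 + 2. *)
fun lucasV_even :: "int \<Rightarrow> nat \<Rightarrow> int" where
  "lucasV_even c 0 = 2"
| "lucasV_even c (Suc 0) = c^2 + 2"
| "lucasV_even c (Suc (Suc k)) = (c^2 + 2) * lucasV_even c (Suc k) - lucasV_even c k"

fun lucasU_even :: "int \<Rightarrow> nat \<Rightarrow> int" where
  "lucasU_even c 0 = 0"
| "lucasU_even c (Suc 0) = c"
| "lucasU_even c (Suc (Suc k)) = (c^2 + 2) * lucasU_even c (Suc k) - lucasU_even c k"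

lemma lucasV_double_eq_lucasV_even: "lucasV P (-1) (2*k) = lucasV_even \<bar>P\<bar> k"
proof (induction "\<bar>P\<bar>" k rule: lucasV_even.induct)
  case (3 k)
  have "2 * Suc (Suc k) = Suc (Suc (Suc (Suc (2*k))))" by simp
  then show ?case using 3 by (simp add: algebra_simps power2_eq_square)
qed (simp_all add: numeral_2_eq_2 power2_eq_square)

lemma lucas_even_Suc:
  shows "2 * lucasV_even c (Suc k) = (c^2 + 2) * lucasV_even c k + c * (c^2 + 4) * lucasU_even c k"
    (is ?V)
  and "2 * lucasU_even c (Suc k) = (c^2 + 2) * lucasU_even c k + c * lucasV_even c k" (is ?U)
proof -
  have "?V \<and> ?U"
  proof (induction c k rule: lucasV_even.induct)
    case (3 c k)
    then show ?case unfolding lucasV_even.simps lucasU_even.simps by algebra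
  qed (simp_all add: algebra_simps power2_eq_square)
  then show ?V ?U by blast+
qed

lemma lucas_even_norm: "lucasV_even c k ^ 2 - (c^2 + 4) * lucasU_even c k ^ 2 = 4"
proof (induction k)
  case (Suc k)
  have "4 * (lucasV_even c (Suc k) ^ 2 - (c^2 + 4) * lucasU_even c (Suc k) ^ 2)
      = (2 * lucasV_even c (Suc k)) ^ 2 - (c^2 + 4) * (2 * lucasU_even c (Suc k)) ^ 2"
    by (simp add: algebra_simps power2_eq_square)
  also have "\<dots> = 4 * (lucasV_even c k ^ 2 - (c^2 + 4) * lucasU_even c k ^ 2)"
    unfolding lucas_even_Suc by (simp add: algebra_simps power2_eq_square)
  finally show ?case using Suc by simp
qed simp

lemma lucas_even_bounds:
  assumes "c \<ge> 1"
  shows "lucasV_even c k \<ge> 2 \<and> lucasU_even c k \<ge> 0"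
proof (induction k)
  case (Suc k)
  have "c^2 + 2 \<ge> 3" using one_le_power[OF assms, of 2] by simp
  then have "(c^2 + 2) * lucasV_even c k \<ge> 3 * 2" using Suc by (intro mult_mono) auto
  moreover have "c * (c^2 + 4) * lucasU_even c k \<ge> 0" "(c^2 + 2) * lucasU_even c k \<ge> 0"
    "c * lucasV_even c k \<ge> 0" using Suc assms by simp_all
  ultimately show ?case using lucas_even_Suc[of c k] by linarith
qed simp

lemma lucasU_even_pos:
  assumes "c \<ge> 1" "k > 0"
  shows "lucasU_even c k > 0"
proof -
  obtain j where k: "k = Suc j" using assms(2) gr0_implies_Suc by blast
  have "(c^2 + 2) * lucasU_even c j \<ge> 0" "c * lucasV_even c j \<ge> 2"
    using lucas_even_bounds[OF assms(1), of j] assms(1) mult_mono[of 1 c 2 "lucasV_even c j"]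
    by simp_all
  then show ?thesis unfolding k using lucas_even_Suc(2)[of c j] by linarith
qed

lemma lucasV_even_mult:
  "b \<le> a \<Longrightarrow> lucasV_even c a * lucasV_even c b = lucasV_even c (a + b) + lucasV_even c (a - b)"
proof (induction c b arbitrary: a rule: lucasV_even.induct)
  case (2 c)
  then obtain a' where "a = Suc a'" by (cases a) auto
  then show ?case by (cases a') (simp_all add: algebra_simps)
next
  case (3 c k)
  define r where "r = a - Suc (Suc k)"
  have r: "a - Suc k = Suc r" "a - k = Suc (Suc r)" using 3(3) unfolding r_def by simp_all
  have "lucasV_even c a * lucasV_even c (Suc (Suc k))
      = (c^2 + 2) * (lucasV_even c a * lucasV_even c (Suc k)) - lucasV_even c a * lucasV_even c k"
    by (simp add: algebra_simps)
  also have "\<dots> = (c^2 + 2) * (lucasV_even c (a + Suc k) + lucasV_even c (Suc r))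
      - (lucasV_even c (a + k) + lucasV_even c (Suc (Suc r)))"
    using 3(1)[of a] 3(2)[of a] 3(3) unfolding r by simp
  also have "\<dots> = lucasV_even c (a + Suc (Suc k)) + lucasV_even c r"
    by (simp add: algebra_simps)
  finally show ?case unfolding r_def .
qed simp

lemma lucasV_even_double: "lucasV_even c (2*k) = lucasV_even c k ^ 2 - 2"
  using lucasV_even_mult[of k k c] by (simp add: power2_eq_square mult_2)

lemma lucasV_even_quadratic_roots:
  fixes x :: int
  assumes "x^2 - lucasV_even c a * lucasV_even c b * x + lucasV_even c a ^ 2 + lucasV_even c b ^ 2 - 4 = 0"
  shows "x = lucasV_even c (a + b) \<or> x = lucasV_even c (max a b - min a b)"
proof -
  define s t where "s = max a b" and "t = min a b"
  have ts: "t \<le> s" "a + b = s + t" unfolding s_def t_def by simp_all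
  have "lucasV_even c (s + t) * lucasV_even c (s - t) = lucasV_even c (2*s) + lucasV_even c (2*t)"
    using lucasV_even_mult[of "s - t" "s + t" c] ts(1) by (simp add: mult_2)
  then have "(x - lucasV_even c (s + t)) * (x - lucasV_even c (s - t))
      = x^2 - lucasV_even c s * lucasV_even c t * x + lucasV_even c s ^ 2 + lucasV_even c t ^ 2 - 4"
    using lucasV_even_mult[OF ts(1), of c] unfolding lucasV_even_double by algebra
  also have "\<dots> = x^2 - lucasV_even c a * lucasV_even c b * x + lucasV_even c a ^ 2 + lucasV_even c b ^ 2 - 4"
    unfolding s_def t_def by (cases "a \<le> b") (simp_all add: max_def min_def algebra_simps)
  finally have "(x - lucasV_even c (s + t)) * (x - lucasV_even c (s - t)) = 0" using assms by simp
  then show ?thesis unfolding ts(2) s_def t_def by auto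
qed

lemma sum_power_le_sigma:
  assumes "n > 0" "A \<subseteq> {d. d dvd n \<and> d > 0}"
  shows "(\<Sum>d\<in>A. d ^ k) \<le> sigma k n"
proof -
  have "finite {d. d dvd n \<and> d > 0}"
    using finite_divisors_nat[OF assms(1)] by (rule finite_subset[rotated]) auto
  then show ?thesis unfolding sigma_def using assms(2) by (rule sum_mono2) simp
qed

lemma divisors_prime_mult_prime:
  assumes "prime (p::nat)" "prime q"
  shows "{d. d dvd p * q \<and> d > 0} = {1, p, q, p * q}"
proof
  show "{d. d dvd p * q \<and> d > 0} \<subseteq> {1, p, q, p * q}"
  proof
    fix d assume "d \<in> {d. d dvd p * q \<and> d > 0}"
    then obtain d1 d2 where "d = d1 * d2" "d1 dvd p" "d2 dvd q" by (auto elim: dvd_productE)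
    moreover have "d1 = 1 \<or> d1 = p" "d2 = 1 \<or> d2 = q"
      using assms \<open>d1 dvd p\<close> \<open>d2 dvd q\<close> prime_nat_iff by blast+
    ultimately show "d \<in> {1, p, q, p * q}" by auto
  qed
qed (use assms in \<open>auto simp: prime_gt_0_nat\<close>)

lemma sigma_prime:
  assumes "prime (p::nat)"
  shows "sigma k p = 1 + p ^ k"
proof -
  have "{d. d dvd p \<and> d > 0} = {1, p}" using assms by (auto simp: prime_nat_iff prime_gt_0_nat)
  then show ?thesis unfolding sigma_def using prime_gt_1_nat[OF assms] by simp
qed

lemma sigma_prime_square:
  assumes "prime (p::nat)"
  shows "sigma k (p * p) = 1 + p ^ k + (p * p) ^ k"
proof -
  have "p > 1" using assms prime_gt_1_nat by blast
  then have "p * p \<noteq> p" "p * p \<noteq> 1" by simp_all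
  with \<open>p > 1\<close> show ?thesis unfolding sigma_def divisors_prime_mult_prime[OF assms assms] by simp
qed

lemma sigma_prime_mult_prime:
  assumes "prime (p::nat)" "prime q" "p \<noteq> q"
  shows "sigma k (p * q) = 1 + p ^ k + q ^ k + (p * q) ^ k"
proof -
  have "p > 1" "q > 1" using assms prime_gt_1_nat by blast+
  then have "p * q \<noteq> p" "p * q \<noteq> q" "p * q \<noteq> 1" by simp_all
  with \<open>p > 1\<close> \<open>q > 1\<close> assms(3) show ?thesis
    unfolding sigma_def divisors_prime_mult_prime[OF assms(1,2)] by simp
qed

lemma nat_factorization_cases:
  fixes n :: nat
  assumes "n > 1"
  obtains "prime n"
    | p where "prime p" "n = p * p"
    | p q where "prime p" "prime q" "p \<noteq> q" "n = p * q"
    | p t where "prime p" "n = p * t" "p * p \<le> t"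
proof -
  define p where "p = (LEAST p. prime p \<and> p dvd n)"
  have "\<exists>p. prime p \<and> p dvd n" using prime_factor_nat[of n] assms by simp
  then have p: "prime p" "p dvd n" unfolding p_def by (metis (mono_tags, lifting) LeastI_ex)+
  have p_le: "p \<le> d" if "d > 1" "d dvd n" for d
  proof -
    have "d \<noteq> 1" using that(1) by simp
    then obtain r where "prime r" "r dvd d" using prime_factor_nat by blast
    then have "p \<le> r" unfolding p_def using that(2) by (auto intro: Least_le dvd_trans)
    also have "r \<le> d" using \<open>r dvd d\<close> that(1) by (simp add: dvd_imp_le)
    finally show ?thesis .
  qed
  define t where "t = n div p"
  have n: "n = p * t" unfolding t_def using p(2) by simp
  consider "t = 1" | "prime t" | "t > 1" "\<not> prime t"
    using n assms by (cases t) (auto simp: Suc_lessI)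
  then show ?thesis
  proof cases
    case 1
    then show ?thesis using that(1) n p(1) by simp
  next
    case 2
    then show ?thesis using that(2,3) n p(1) by (cases "p = t") auto
  next
    case 3
    then obtain e where "e dvd t" "e \<noteq> 1" "e \<noteq> t" by (auto simp: prime_nat_iff)
    then obtain f where t: "t = e * f" by blast
    then have ef: "e > 1" "f > 1" using 3(1) \<open>e \<noteq> 1\<close> \<open>e \<noteq> t\<close> by (auto simp: nat_neq_iff)
    have "p \<le> e" "p \<le> f" using t ef n by (auto intro!: p_le)
    then have "p * p \<le> t" unfolding t by (simp add: mult_le_mono)
    then show ?thesis using that(4) n p(1) by blast
  qed
qed

definition sigma2_solution :: "int \<Rightarrow> nat \<Rightarrow> bool" where
  "sigma2_solution V n \<longleftrightarrow> int (sigma 2 n) - int n ^ 2 = V * int n - V^2 + 5"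

lemma cube_le_threshold_cube:
  fixes V :: int
  assumes "V \<ge> 3"
  shows "V^3 \<le> (V + V^2 - 5)^3"
proof -
  have "V^2 \<ge> 3 * V" using assms by (simp add: power2_eq_square)
  then show ?thesis using assms by (intro power_mono) auto
qed

lemma sigma2_solution_prime_le:
  fixes V :: int
  assumes "V \<ge> 2" "prime n" "sigma2_solution V n"
  shows "int n \<le> (V + V^2 - 5)^3"
proof -
  have "V * int n = V^2 - 4"
    using assms(3) sigma_prime[OF assms(2), of 2] unfolding sigma2_solution_def by simp
  then have "V * int n < V * V" by (simp add: power2_eq_square)
  then have "int n < V" using assms(1) by (simp add: mult_less_cancel_left)
  moreover have "V \<noteq> 2" using \<open>V * int n = V^2 - 4\<close> assms(2) by auto
  ultimately show ?thesis
    using cube_le_threshold_cube[of V] assms(1) self_le_power[of V 3] by linarith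
qed

lemma sigma2_solution_prime_square_le:
  fixes V :: int
  assumes "V \<ge> 2" "prime p" "sigma2_solution V (p * p)"
  shows "int (p * p) \<le> (V + V^2 - 5)^3"
proof -
  have e: "(V - 1) * (int p * int p) = (V - 2) * (V + 2)"
    using assms(3) sigma_prime_square[OF assms(2), of 2] unfolding sigma2_solution_def
    by (simp add: power2_eq_square algebra_simps)
  have "V \<noteq> 2" using e assms(2) by auto
  then have "(V - 1) * (int p * int p) < (V - 1) * (V + 2)" using e assms(1) by simp
  then have "int (p * p) < V + 2" using assms(1) by (simp add: mult_less_cancel_left)
  moreover have "3 * V \<le> V^2"
    using \<open>V \<noteq> 2\<close> assms(1) by (simp add: power2_eq_square mult_right_mono)
  moreover have "V^2 \<le> V^3" using assms(1) by (intro power_increasing) auto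
  ultimately show ?thesis using cube_le_threshold_cube[of V] \<open>V \<noteq> 2\<close> assms(1) by linarith
qed

lemma sigma2_ge_large_cofactor:
  assumes "prime p" "p * p \<le> t"
  shows "1 + p^2 + t^2 + (p * t)^2 \<le> sigma 2 (p * t)"
proof -
  have p: "p > 1" using assms(1) prime_gt_1_nat by blast
  have "p < p * p" using p by simp
  then have pt: "p < t" using assms(2) by linarith
  have tn: "t < p * t" using p pt by simp
  have "1 + p^2 + t^2 + (p * t)^2 = (\<Sum>d\<in>{1, p, t, p * t}. d^2)" using p pt tn by simp
  also have "\<dots> \<le> sigma 2 (p * t)" using p pt by (intro sum_power_le_sigma) auto
  finally show ?thesis .
qed

lemma sigma2_solution_large_cofactor_le:
  fixes V :: int
  assumes "V \<ge> 2" "prime p" "p * p \<le> t" "sigma2_solution V (p * t)"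
  shows "int (p * t) \<le> (V + V^2 - 5)^3"
proof -
  have p: "p > 1" using assms(2) prime_gt_1_nat by blast
  have "p < p * p" using p by simp
  then have pt: "p < t" using assms(3) by linarith
  have "int (1 + p^2 + t^2 + (p * t)^2) \<le> int (sigma 2 (p * t))"
    using sigma2_ge_large_cofactor[OF assms(2,3)] by (rule of_nat_mono)
  then have ineq: "1 + int p^2 + int t^2 \<le> V * (int p * int t) - V^2 + 5"
    using assms(4) unfolding sigma2_solution_def by simp
  have "V \<noteq> 2"
  proof
    assume "V = 2"
    then have "(int t - int p)^2 \<le> 0" using ineq by (simp add: power2_eq_square algebra_simps)
    then show False using pt by simp
  qed
  then have "V^2 \<ge> 9" using assms(1) mult_mono[of 3 V 3 V] by (simp add: power2_eq_square)
  moreover have "V * V + int p * int p + int t * int t \<le> 4 + V * (int p * int t)"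
    using ineq by (simp add: power2_eq_square algebra_simps)
  moreover have "0 \<le> int p * int p" by simp
  ultimately have "int t * int t < (V * int p) * int t" unfolding power2_eq_square by linarith
  then have t_lt: "int t < V * int p" using pt by (simp add: mult_less_cancel_right)
  have "int p * int p \<le> int t" using assms(3) by (simp flip: of_nat_mult)
  then have "int p * int p < V * int p" using t_lt by linarith
  then have "int p < V" using p by (simp add: mult_less_cancel_right)
  have "int (p * t) < int p * (V * int p)" using t_lt p by (simp add: mult_less_cancel_left)
  also have "\<dots> = V * (int p * int p)" by simp
  also have "\<dots> \<le> V * (V * V)"
    using \<open>int p < V\<close> assms(1) by (intro mult_left_mono mult_mono) auto
  also have "\<dots> = V^3" by (simp add: power3_eq_cube)
  also have "\<dots> \<le> (V + V^2 - 5)^3" using cube_le_threshold_cube \<open>V \<noteq> 2\<close> assms(1) by simp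
  finally show ?thesis by (rule less_imp_le)
qed

lemma sigma2_solution_semiprime:
  fixes V :: int
  assumes "V \<ge> 2" "sigma2_solution V n" "int n > (V + V^2 - 5)^3"
  obtains p q where "prime p" "prime q" "p \<noteq> q" "n = p * q"
proof -
  have "1 \<le> V + V^2 - 5" using assms(1) mult_mono[of 2 V 2 V] by (simp add: power2_eq_square)
  then have "1 \<le> (V + V^2 - 5)^3" by (rule one_le_power)
  then have "n > 1" using assms(3) by linarith
  then show ?thesis
  proof (cases rule: nat_factorization_cases)
    case 1
    with sigma2_solution_prime_le[OF assms(1) 1 assms(2)] assms(3) show ?thesis by linarith
  next
    case (2 p)
    with sigma2_solution_prime_square_le[OF assms(1) 2(1)] assms(2,3) show ?thesis by simp
  next
    case (3 p q)
    then show ?thesis using that by blast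
  next
    case (4 p t)
    with sigma2_solution_large_cofactor_le[OF assms(1) 4(1,3)] assms(2,3) show ?thesis by simp
  qed
qed

lemma squarefree_dvd_square:
  fixes D t :: int
  assumes "squarefree D" "D dvd t^2"
  shows "D dvd t"
proof -
  have "D \<noteq> 0" using assms(1) by auto
  define g where "g = gcd D t"
  have "g \<noteq> 0" using \<open>D \<noteq> 0\<close> unfolding g_def by simp
  define h s where "h = D div g" and "s = t div g"
  have hs: "D = g * h" "t = g * s" unfolding h_def s_def g_def by simp_all
  have "coprime h s" unfolding h_def s_def g_def using \<open>D \<noteq> 0\<close> by (intro div_gcd_coprime) simp
  have "g * h dvd g * (g * s^2)" using assms(2) hs by (simp add: power2_eq_square ac_simps)
  then have "h dvd g * s^2" using \<open>g \<noteq> 0\<close> by simp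
  then have "h dvd g" using \<open>coprime h s\<close> by (simp add: coprime_dvd_mult_left_iff)
  then have "h^2 dvd D" using hs by (simp add: power2_eq_square)
  then have "h dvd 1" using assms(1) squarefreeD by blast
  then have "D dvd g" "g dvd t" using hs by auto
  then show ?thesis by (rule dvd_trans)
qed

lemma squarefree_square_eq_multiple:
  fixes D S x u :: int
  assumes "squarefree D" "S \<noteq> 0" "x^2 = D * S^2 * u"
  obtains y where "u = D * y^2"
proof -
  have "S^2 dvd x^2" using assms(3) by simp
  then obtain r where r: "x = S * r" by auto
  then have "S^2 * r^2 = S^2 * (D * u)" using assms(3) by (simp add: power_mult_distrib ac_simps)
  then have ru: "r^2 = D * u" using assms(2) by simp
  then have "D dvd r" using squarefree_dvd_square[OF assms(1)] by simp
  then obtain y where "r = D * y" by blast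
  then have "D * (D * y^2) = D * u" using ru by (simp add: power2_eq_square ac_simps)
  then have "u = D * y^2" using assms(1) by auto
  then show ?thesis using that by blast
qed

lemma pell4_half_difference:
  fixes c x z :: int
  assumes "x^2 - (c^2 + 4) * z^2 = 4"
  obtains e where "x = c * z + 2 * e" "e * (c * z + e) = z^2 + 1"
proof -
  have prod: "(x - c * z) * (x + c * z) = 4 * (z^2 + 1)"
    using assms by (simp add: algebra_simps power2_eq_square)
  have "even (x - c * z)"
  proof (rule ccontr)
    assume odd: "odd (x - c * z)"
    have "x + c * z = (x - c * z) + 2 * (c * z)" by simp
    with odd have "odd (x + c * z)" by simp
    with odd have "odd ((x - c * z) * (x + c * z))" by simp
    with prod show False by simp
  qed
  then obtain e where x: "x = c * z + 2 * e" by (metis dvd_def add_diff_cancel_left' diff_add_cancel)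
  moreover have "e * (c * z + e) = z^2 + 1"
    using prod unfolding x by (simp add: algebra_simps power2_eq_square)
  ultimately show ?thesis using that by blast
qed

lemma pell4_descent:
  fixes c x z :: int
  assumes c: "c \<ge> 1" and "x > 0" "z > 0" and eq: "x^2 - (c^2 + 4) * z^2 = 4"
  obtains x' z' where "x' > 0" "0 \<le> z'" "z' < z" "x'^2 - (c^2 + 4) * z'^2 = 4"
    "2 * x = (c^2 + 2) * x' + c * (c^2 + 4) * z'" "2 * z = (c^2 + 2) * z' + c * x'"
proof -
  obtain e where x: "x = c * z + 2 * e" and rel: "e * (c * z + e) = z^2 + 1"
    using pell4_half_difference[OF eq] .
  have "e > 0"
  proof (rule ccontr)
    assume "\<not> e > 0"
    moreover have "c * z + e > 0" using \<open>x > 0\<close> \<open>\<not> e > 0\<close> x by linarith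
    ultimately have "e * (c * z + e) \<le> 0" by (simp add: mult_nonpos_nonneg)
    then show False using rel zero_le_power2[of z] by linarith
  qed
  \<comment> \<open>Invert the step of \<open>lucas_even_Suc\<close>: \<open>(x', z') = (2e - c z', z - c e)\<close>.\<close>
  define z' where "z' = z - c * e"
  define x' where "x' = 2 * e - c * z'"
  have "0 \<le> z'"
  proof (rule ccontr)
    assume "\<not> 0 \<le> z'"
    then have "(z + 1) * z \<le> (c * e) * z" using \<open>z > 0\<close> unfolding z'_def by (intro mult_right_mono) auto
    moreover have "e * e > 0" using \<open>e > 0\<close> by simp
    ultimately have "e * (c * z + e) > z^2 + 1"
      using \<open>z > 0\<close> by (simp add: algebra_simps power2_eq_square)
    then show False using rel by simp
  qed
  moreover have "z' < z" unfolding z'_def using c \<open>e > 0\<close> by simp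
  moreover have rel': "e^2 = c * e * z' + z'^2 + 1"
    using rel unfolding z'_def by (simp add: algebra_simps power2_eq_square)
  have "x' > 0"
  proof (cases "z' = 0")
    case False
    then have "e * e > (c * z') * e"
      using rel' \<open>0 \<le> z'\<close> by (simp add: algebra_simps power2_eq_square add_pos_nonneg)
    then show ?thesis using \<open>e > 0\<close> unfolding x'_def by (simp add: mult_less_cancel_right)
  qed (use \<open>e > 0\<close> in \<open>simp add: x'_def\<close>)
  moreover have "x'^2 - (c^2 + 4) * z'^2 = 4"
    using rel' unfolding x'_def by (simp add: algebra_simps power2_eq_square)
  moreover have "2 * x = (c^2 + 2) * x' + c * (c^2 + 4) * z'" "2 * z = (c^2 + 2) * z' + c * x'"
    unfolding x'_def z'_def x by (simp_all add: algebra_simps power2_eq_square)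
  ultimately show ?thesis using that by blast
qed

lemma pell4_solution_eq_lucas_even:
  fixes c x z :: int
  assumes "c \<ge> 1" "x > 0" "z \<ge> 0" "x^2 - (c^2 + 4) * z^2 = 4"
  shows "\<exists>k. x = lucasV_even c k \<and> z = lucasU_even c k"
  using assms(2-4)
proof (induction "nat z" arbitrary: x z rule: less_induct)
  case less
  show ?case
  proof (cases "z = 0")
    case True
    then have "x^2 = 2^2" using less.prems(3) by simp
    then have "x = 2" using less.prems(1) power2_eq_iff_nonneg[of x 2] by simp
    then show ?thesis using True by (intro exI[of _ 0]) simp
  next
    case False
    with less.prems obtain x' z' where x'z': "x' > 0" "0 \<le> z'" "z' < z" "x'^2 - (c^2 + 4) * z'^2 = 4"
      "2 * x = (c^2 + 2) * x' + c * (c^2 + 4) * z'" "2 * z = (c^2 + 2) * z' + c * x'"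
      using pell4_descent[OF assms(1)] by (metis order_neq_le_trans)
    obtain j where "x' = lucasV_even c j" "z' = lucasU_even c j"
      using less.hyps[of z' x'] x'z'(1-4) by auto
    then show ?thesis using x'z'(5,6) lucas_even_Suc[of c j] by (intro exI[of _ "Suc j"]) simp
  qed
qed

lemma sigma2_semiprime_solution_factors:
  fixes c :: int and p q :: nat
  assumes c: "c \<ge> 1" and sqf: "squarefree (c^2 + 4)" and pq: "prime p" "prime q" "p \<noteq> q"
    and sol: "sigma2_solution (lucasV_even c m) (p * q)"
  obtains k where "int p = lucasV_even c k"
    "int q = lucasV_even c (k + m) \<or> int q = lucasV_even c (max k m - min k m)"
proof -
  define V where "V = lucasV_even c m"
  have "int (sigma 2 (p * q)) = 1 + int p^2 + int q^2 + (int p * int q)^2"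
    using sigma_prime_mult_prime[OF pq, of 2] by simp
  then have eq: "int q^2 - V * int p * int q + int p^2 + V^2 - 4 = 0"
    using sol unfolding sigma2_solution_def V_def by (simp add: algebra_simps power2_eq_square)
  have disc: "(2 * int q - V * int p)^2 = (V^2 - 4) * (int p^2 - 4)"
    using eq by (simp add: algebra_simps power2_eq_square)
  have "m \<noteq> 0"
  proof
    assume "m = 0"
    then have "(2 * int q - 2 * int p)^2 = 0" using disc by (simp add: V_def)
    then show False using pq(3) by simp
  qed
  then have "lucasU_even c m \<noteq> 0" using lucasU_even_pos[OF c, of m] by simp
  moreover have "V^2 - 4 = (c^2 + 4) * (lucasU_even c m)^2"
    using lucas_even_norm[of c m] unfolding V_def by linarith
  then have "(2 * int q - V * int p)^2 = (c^2 + 4) * (lucasU_even c m)^2 * (int p^2 - 4)"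
    unfolding disc by simp
  ultimately obtain y where "int p^2 - 4 = (c^2 + 4) * y^2"
    using squarefree_square_eq_multiple[OF sqf] by blast
  then have "int p^2 - (c^2 + 4) * \<bar>y\<bar>^2 = 4" by simp
  moreover have "int p > 0" using prime_gt_0_nat[OF pq(1)] by simp
  ultimately obtain k where k: "int p = lucasV_even c k"
    using pell4_solution_eq_lucas_even[OF c] abs_ge_zero[of y] by blast
  have "int q^2 - lucasV_even c k * lucasV_even c m * int q
      + lucasV_even c k ^ 2 + lucasV_even c m ^ 2 - 4 = 0"
    using eq unfolding k V_def by (simp add: ac_simps)
  from lucasV_even_quadratic_roots[OF this] show ?thesis using k that by blast
qed

lemma lucasV_even_semiprime_forms:
  fixes p q :: int
  assumes "prime p" "prime q" "p \<noteq> q" "p = lucasV_even c k"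
    "q = lucasV_even c (k + m) \<or> q = lucasV_even c (max k m - min k m)"
  shows "(\<exists>j. p * q = lucasV_even c j * lucasV_even c (j + m)
            \<and> prime (lucasV_even c j) \<and> prime (lucasV_even c (j + m)))
       \<or> (\<exists>j \<le> m. m \<noteq> 2 * j \<and> p * q = lucasV_even c j * lucasV_even c (m - j)
            \<and> prime (lucasV_even c j) \<and> prime (lucasV_even c (m - j)))"
proof -
  consider "q = lucasV_even c (k + m)" | "m \<le> k" "q = lucasV_even c (k - m)"
    | "k < m" "q = lucasV_even c (m - k)"
    using assms(5) by (cases "m \<le> k") (auto simp: max_def min_def)
  then show ?thesis
  proof cases
    case 1
    then show ?thesis using assms(1,2,4) by blast
  next
    case 2
    then have "p = lucasV_even c (k - m + m)" using assms(4) by simp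
    then show ?thesis using 2(2) assms(1,2) by (metis mult.commute)
  next
    case 3
    have "m \<noteq> 2 * k" using 3(2) assms(3,4) by auto
    then show ?thesis using 3 assms(1,2,4) by (metis less_imp_le)
  qed
qed

theorem theorem1p6:
  fixes P :: int and m n :: nat
  assumes "squarefree (P^2 + 4)"
    and "n > 0"
    and "int (sigma 2 n) - int n ^ 2
           = lucasV P (-1) (2*m) * int n - (lucasV P (-1) (2*m))^2 + 5"
    and "int n > (\<bar>lucasV P (-1) (2*m)\<bar> + (lucasV P (-1) (2*m))^2 - 5) ^ 3"
  shows "(\<exists>k::nat. int n = lucasV P (-1) (2*k) * lucasV P (-1) (2*k + 2*m)
            \<and> prime (lucasV P (-1) (2*k)) \<and> prime (lucasV P (-1) (2*k + 2*m)))
       \<or> (\<exists>k::nat. k \<le> m \<and> m \<noteq> 2*k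
            \<and> int n = lucasV P (-1) (2*k) * lucasV P (-1) (2*m - 2*k)
            \<and> prime (lucasV P (-1) (2*k)) \<and> prime (lucasV P (-1) (2*m - 2*k)))"
proof -
  define c where "c = \<bar>P\<bar>"
  have sqf: "squarefree (c^2 + 4)" using assms(1) by (simp add: c_def)
  have "\<not> squarefree (4 :: int)" by (rule not_squarefreeI[of 2]) auto
  then have c: "c \<ge> 1" using sqf unfolding c_def by (cases "P = 0") auto
  have L: "\<And>j. lucasV P (-1) (2 * j) = lucasV_even c j"
    unfolding c_def by (rule lucasV_double_eq_lucasV_even)
  define V where "V = lucasV_even c m"
  have V: "V \<ge> 2" using lucas_even_bounds[OF c] unfolding V_def by blast
  have "sigma2_solution V n" "int n > (V + V^2 - 5)^3"
    using assms(3,4) V unfolding sigma2_solution_def L V_def by simp_all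
  then obtain p q where pq: "prime p" "prime q" "p \<noteq> q" "n = p * q"
    using sigma2_solution_semiprime[OF V] by blast
  have "sigma2_solution (lucasV_even c m) (p * q)" using \<open>sigma2_solution V n\<close> pq(4) V_def by simp
  then obtain k where k: "int p = lucasV_even c k"
      "int q = lucasV_even c (k + m) \<or> int q = lucasV_even c (max k m - min k m)"
    by (rule sigma2_semiprime_solution_factors[OF c sqf pq(1-3)])
  have "prime (int p)" "prime (int q)" "int p \<noteq> int q" using pq(1-3) by simp_all
  from lucasV_even_semiprime_forms[OF this k] show ?thesis
    unfolding add_mult_distrib2[symmetric] diff_mult_distrib2[symmetric] L pq(4) of_nat_mult .
qed

end
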